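(* Let $a>0$ and let $J$ be a kernel on $\mathbb{H}^1_L$ such that $J(e)\ge aL\log(j)L^{-2j}$ for every edge $e$ with $|e|=L^j$. Then for all $k\in\mathbb{N}$ there is a constant $C=C(k,J)$ such that for every $n\ge1$ and every $\gamma\in\{L^{-k},2L^{-k},\ldots,1-L^{-k},1\}$, \[\mathbb{P}_J(\Lambda_{n,n+k}\text{ is not connected})\le Cn^{-a/2}\quad\text{and}\quad\mathbb{P}_J(\Lambda_{n,n+k}\text{ has a cluster of density }\gamma)\le Cn^{-a(1-\gamma)}.\]
   Context: $\mathbb{H}^1_L$ ($L\ge2$ an integer) is the group $\bigoplus_{i=1}^\infty\mathbb{Z}/L\mathbb{Z}$ with ultrametric $\|x-y\|=L^{\max\{i:x_i\neq y_i\}}$ for $x\neq y$; $\Lambda_n(x)$ is the ball of radius $L^n$ around $x$ (an $n$-block). Edges are unordered pairs of distinct vertices with $|e|=\|x-y\|$; a kernel is any $J:E\to[0,\infty)$. $\mathbb{P}_J$: each edge open independently with probability $1-\exp(-J(e))$, giving configuration $\omega$. $\Lambda_{n,n+k}$ is the set of the $L^k$ $n$-blocks contained in $\Lambda_{n+k}(0)$, regarded as the vertex set of the random graph $\omega_{n,n+k}$ in which two distinct $n$-blocks are adjacent iff some open edge of $\omega$ has one endpoint in each. "$\Lambda_{n,n+k}$ is not connected" means $\omega_{n,n+k}$ is not connected; "has a cluster of density $\gamma$" means $\omega_{n,n+k}$ has a connected component consisting of exactly $\gamma L^k$ blocks. *)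

theory Defs
  imports "HOL-Analysis.Analysis" "HOL-Probability.Product_PMF"
begin

text \<open>Vertices of H^1_L: sequences x :: nat => nat, coordinates indexed from 1
  (x 0 = 0 is a dummy), each x i in {0..L-1}, finitely supported.\<close>
definition hvert :: "nat \<Rightarrow> (nat \<Rightarrow> nat) set" where
  "hvert L = {x. (\<forall>i. x i < L) \<and> x 0 = 0 \<and> finite {i. x i \<noteq> 0}}"

text \<open>For x ~= y, the distance is L ^ hdexp x y.\<close>
definition hdexp :: "(nat \<Rightarrow> nat) \<Rightarrow> (nat \<Rightarrow> nat) \<Rightarrow> nat" where
  "hdexp x y = Max {i. x i \<noteq> y i}"

definition hedges :: "nat \<Rightarrow> (nat \<Rightarrow> nat) set set" where
  "hedges L = {{x, y} | x y. x \<in> hvert L \<and> y \<in> hvert L \<and> x \<noteq> y}"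

text \<open>Ball of radius L^n around x (an n-block).\<close>
definition hball :: "nat \<Rightarrow> nat \<Rightarrow> (nat \<Rightarrow> nat) \<Rightarrow> (nat \<Rightarrow> nat) set" where
  "hball L n x = {y \<in> hvert L. \<forall>i>n. y i = x i}"

definition box_edges :: "nat \<Rightarrow> nat \<Rightarrow> (nat \<Rightarrow> nat) set set" where
  "box_edges L N = {{x, y} | x y. x \<in> hball L N (\<lambda>_. 0) \<and> y \<in> hball L N (\<lambda>_. 0) \<and> x \<noteq> y}"

definition blocks :: "nat \<Rightarrow> nat \<Rightarrow> nat \<Rightarrow> (nat \<Rightarrow> nat) set set" where
  "blocks L n k = {hball L n x | x. x \<in> hball L (n + k) (\<lambda>_. 0)}"

definition block_adj ::
  "nat \<Rightarrow> nat \<Rightarrow> nat \<Rightarrow> ((nat \<Rightarrow> nat) set \<Rightarrow> bool) \<Rightarrow> (nat \<Rightarrow> nat) set \<Rightarrow> (nat \<Rightarrow> nat) set \<Rightarrow> bool" where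
  "block_adj L n k \<omega> B1 B2 \<longleftrightarrow> B1 \<in> blocks L n k \<and> B2 \<in> blocks L n k \<and> B1 \<noteq> B2 \<and>
     (\<exists>x\<in>B1. \<exists>y\<in>B2. \<omega> {x, y})"

definition blocks_connected :: "nat \<Rightarrow> nat \<Rightarrow> nat \<Rightarrow> ((nat \<Rightarrow> nat) set \<Rightarrow> bool) \<Rightarrow> bool" where
  "blocks_connected L n k \<omega> \<longleftrightarrow>
     (\<forall>B1\<in>blocks L n k. \<forall>B2\<in>blocks L n k. (block_adj L n k \<omega>)\<^sup>*\<^sup>* B1 B2)"

definition has_cluster_of_size :: "nat \<Rightarrow> nat \<Rightarrow> nat \<Rightarrow> ((nat \<Rightarrow> nat) set \<Rightarrow> bool) \<Rightarrow> nat \<Rightarrow> bool" where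
  "has_cluster_of_size L n k \<omega> m \<longleftrightarrow>
     (\<exists>B\<in>blocks L n k. card {B'. (block_adj L n k \<omega>)\<^sup>*\<^sup>* B B'} = m)"

text \<open>Law of the restriction of omega (under P_J) to the finitely many edges inside
  Lambda_N(0); edges outside are set to closed (they do not affect the events).\<close>
definition perc_pmf :: "nat \<Rightarrow> ((nat \<Rightarrow> nat) set \<Rightarrow> real) \<Rightarrow> nat \<Rightarrow> ((nat \<Rightarrow> nat) set \<Rightarrow> bool) pmf" where
  "perc_pmf L J N = Pi_pmf (box_edges L N) False (\<lambda>e. bernoulli_pmf (1 - exp (- J e)))"

end

theory Submission
  imports Defs
begin

text \<open>
  Let \<open>V\<close> be the ball of radius \<open>L^(n+k)\<close> around \<open>0\<close>. If the block graph is disconnected or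
  has a cluster of \<open>\<gamma> L^k\<close> blocks, then some nonempty union \<open>U\<close> of \<open>n\<close>-blocks (the cluster or,
  for disconnectedness, whichever of the cluster and its complement has at most half of the
  blocks) has every edge between \<open>U\<close> and \<open>V - U\<close> closed. By independence this has probability
  \<open>exp (- \<Sum>x\<in>U. \<Sum>y\<in>V - U. J {x, y})\<close>. Such \<open>x\<close> and \<open>y\<close> lie in different \<open>n\<close>-blocks, so their
  distance is \<open>L^d\<close> with \<open>d > n\<close> and \<open>J {x, y} \<ge> a ln n L^(1 - 2d)\<close>. An induction over the
  levels of the ultrametric, splitting a ball into its \<open>L\<close> sub-balls, shows that the sum of
  \<open>L^(1 - 2d(x,y))\<close> over the same pairs is at least \<open>1 - |U|/|V|\<close>. Each such event therefore has
  probability at most \<open>n^(-a(1 - |U|/|V|))\<close>, and a union bound over the \<open>2^(L^k)\<close> sets of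
  blocks gives \<open>C = 2^(L^k)\<close>.
\<close>

section \<open>Balls and blocks\<close>

lemma hvert_fun_upd:
  assumes "z \<in> hvert L" "c < L" "0 < j"
  shows "z(j := c) \<in> hvert L"
proof -
  have "{i. (z(j := c)) i \<noteq> 0} \<subseteq> insert j {i. z i \<noteq> 0}" by auto
  moreover have "finite {i. z i \<noteq> 0}" using assms(1) by (simp add: hvert_def)
  ultimately have "finite {i. (z(j := c)) i \<noteq> 0}" using finite_subset by blast
  then show ?thesis using assms unfolding hvert_def by auto
qed

lemma hball_subset_hvert: "hball L N z \<subseteq> hvert L"
  by (auto simp: hball_def)

lemma hball_refl: "z \<in> hvert L \<Longrightarrow> z \<in> hball L N z"
  by (simp add: hball_def)

lemma hball_eq_if_mem: "y \<in> hball L n x \<Longrightarrow> hball L n y = hball L n x"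
  by (auto simp: hball_def)

lemma hball_Suc: "hball L (Suc N) z = (\<Union>c<L. hball L N (z(Suc N := c)))"
  by (auto simp: hball_def hvert_def)

lemma hball_Suc_disjoint:
  "c \<noteq> c' \<Longrightarrow> hball L N (z(Suc N := c)) \<inter> hball L N (z(Suc N := c')) = {}"
  by (auto simp: hball_def)

lemma finite_card_hball:
  assumes "z \<in> hvert L"
  shows "finite (hball L N z) \<and> card (hball L N z) = L ^ N"
  using assms
proof (induction N arbitrary: z)
  case 0
  then have "hball L 0 z = {z}"
    by (auto simp: hball_def hvert_def fun_eq_iff) (metis neq0_conv)
  then show ?case by simp
next
  case (Suc N)
  have IH: "finite (hball L N (z(Suc N := c))) \<and> card (hball L N (z(Suc N := c))) = L ^ N"
    if "c < L" for c
    using Suc hvert_fun_upd that by blast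
  have "card (\<Union>c<L. hball L N (z(Suc N := c))) = (\<Sum>c<L. card (hball L N (z(Suc N := c))))"
    using IH hball_Suc_disjoint by (intro card_UN_disjoint) auto
  then show ?case using IH by (simp add: hball_Suc)
qed

lemma finite_hball: "z \<in> hvert L \<Longrightarrow> finite (hball L N z)"
  using finite_card_hball by blast

lemma card_hball: "z \<in> hvert L \<Longrightarrow> card (hball L N z) = L ^ N"
  using finite_card_hball by blast

lemma zero_in_hvert: "1 \<le> L \<Longrightarrow> (\<lambda>_. 0) \<in> hvert L"
  by (simp add: hvert_def)

lemma finite_coord_diff: "x \<in> hvert L \<Longrightarrow> y \<in> hvert L \<Longrightarrow> finite {i. x i \<noteq> y i}"
  by (rule finite_subset[of _ "{i. x i \<noteq> 0} \<union> {i. y i \<noteq> 0}"]) (auto simp: hvert_def)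

lemma hdexp_le_imp_mem_hball:
  assumes "x \<in> hvert L" "y \<in> hvert L" "hdexp x y \<le> n"
  shows "y \<in> hball L n x"
proof -
  have "i \<le> hdexp x y" if "x i \<noteq> y i" for i
    unfolding hdexp_def using that finite_coord_diff[OF assms(1,2)] by (intro Max_ge) auto
  then have "\<forall>i>n. y i = x i" using assms(3) by (metis le_trans not_le)
  then show ?thesis using assms(2) by (simp add: hball_def)
qed

lemma hdexp_hball_Suc:
  assumes "x \<in> hball L N (z(Suc N := c))" "y \<in> hball L N (z(Suc N := c'))" "c \<noteq> c'"
  shows "hdexp x y = Suc N"
  unfolding hdexp_def
proof (rule Max_eqI)
  show "finite {i. x i \<noteq> y i}"
    using assms hball_subset_hvert finite_coord_diff by blast
  show "i \<le> Suc N" if "i \<in> {i. x i \<noteq> y i}" for i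
    using assms that by (cases "i \<le> Suc N") (auto simp: hball_def)
  show "Suc N \<in> {i. x i \<noteq> y i}"
    using assms by (auto simp: hball_def)
qed

lemma blocks_eq_hball: "B \<in> blocks L n k \<Longrightarrow> y \<in> B \<Longrightarrow> B = hball L n y"
  by (auto simp: blocks_def hball_eq_if_mem)

lemma hball_in_blocks: "y \<in> hball L (n + k) (\<lambda>_. 0) \<Longrightarrow> hball L n y \<in> blocks L n k"
  by (auto simp: blocks_def)

lemma Union_blocks: "\<Union> (blocks L n k) = hball L (n + k) (\<lambda>_. 0)"
proof
  show "\<Union> (blocks L n k) \<subseteq> hball L (n + k) (\<lambda>_. 0)"
    by (auto simp: blocks_def hball_def)
  show "hball L (n + k) (\<lambda>_. 0) \<subseteq> \<Union> (blocks L n k)"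
    using hball_in_blocks hball_refl hball_subset_hvert by blast
qed

lemma blocks_disjoint: "B \<in> blocks L n k \<Longrightarrow> B' \<in> blocks L n k \<Longrightarrow> B \<noteq> B' \<Longrightarrow> B \<inter> B' = {}"
  using blocks_eq_hball by blast

lemma card_Union_blocks:
  assumes L: "1 \<le> L" and S: "S \<subseteq> blocks L n k"
  shows "card (\<Union>S) = card S * L ^ n"
proof -
  have block: "finite B \<and> card B = L ^ n" if "B \<in> blocks L n k" for B
    using that finite_card_hball by (auto simp: blocks_def hball_def)
  have "finite (\<Union>S)"
    using finite_hball[OF zero_in_hvert[OF L]] Union_blocks S
    by (metis Union_mono finite_subset)
  then have "finite S" by (rule finite_UnionD)
  moreover have "pairwise disjnt S"
    using S blocks_disjoint unfolding pairwise_def disjnt_def by blast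
  ultimately have "card (\<Union>S) = (\<Sum>B\<in>S. card B)"
    using S block by (intro card_Union_disjoint) auto
  also have "\<dots> = (\<Sum>B\<in>S. L ^ n)" using S block by (intro sum.cong) auto
  also have "\<dots> = card S * L ^ n" by simp
  finally show ?thesis .
qed

lemma finite_blocks: "1 \<le> L \<Longrightarrow> finite (blocks L n k)"
  using finite_hball[OF zero_in_hvert] Union_blocks by (metis finite_UnionD)

lemma card_blocks:
  assumes "1 \<le> L"
  shows "card (blocks L n k) = L ^ k"
proof -
  have "card (blocks L n k) * L ^ n = L ^ k * L ^ n"
    using card_Union_blocks[OF assms order_refl] card_hball[OF zero_in_hvert[OF assms], of "n + k"]
    by (metis Union_blocks power_add mult.commute)
  then show ?thesis using assms by simp
qed

lemma Union_Diff_blocks: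
  assumes "S \<subseteq> blocks L n k"
  shows "\<Union> (blocks L n k - S) = hball L (n + k) (\<lambda>_. 0) - \<Union>S"
  using assms blocks_disjoint by (auto simp flip: Union_blocks) blast

lemma less_hdexp_if_separated_by_blocks:
  assumes S: "S \<subseteq> blocks L n k" and x: "x \<in> \<Union>S" and y: "y \<in> hball L (n + k) (\<lambda>_. 0) - \<Union>S"
  shows "n < hdexp x y"
proof (rule ccontr)
  obtain B where B: "B \<in> S" "x \<in> B" using x by blast
  then have "B = hball L n x" using S blocks_eq_hball by blast
  moreover have "x \<in> hvert L" "y \<in> hvert L"
    using B S y by (auto simp: blocks_def hball_def)
  moreover assume "\<not> n < hdexp x y"
  ultimately have "y \<in> B" using hdexp_le_imp_mem_hball by simp
  then show False using y B by blast
qed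

section \<open>Cut weights\<close>

definition cut_weight :: "nat \<Rightarrow> (nat \<Rightarrow> nat) set \<Rightarrow> (nat \<Rightarrow> nat) set \<Rightarrow> real" where
  "cut_weight L U W = (\<Sum>x\<in>U. \<Sum>y\<in>W - U. real L / real L ^ (2 * hdexp x y))"

lemma cut_weight_nonneg: "0 \<le> cut_weight L U W"
  unfolding cut_weight_def by (intro sum_nonneg) auto

lemma cut_weight_recursion_ge:
  fixes L :: nat and M :: real and u I :: "nat \<Rightarrow> real"
  assumes L: "1 \<le> L" and M: "0 < M"
    and u: "\<And>c. c < L \<Longrightarrow> 0 \<le> u c \<and> u c \<le> M"
    and I: "\<And>c. c < L \<Longrightarrow> 0 \<le> I c" "\<And>c. c < L \<Longrightarrow> 0 < u c \<Longrightarrow> 1 - u c / M \<le> I c"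
    and c0: "c0 < L" "0 < u c0"
  defines "S \<equiv> \<Sum>c<L. u c"
  shows "1 - S / (L * M) \<le> (\<Sum>c<L. I c + u c * (L * M - S - (M - u c)) / (L * M\<^sup>2))"
proof -
  define q where "q = 1 / (L * M\<^sup>2)"
  define G where "G c = I c - u c * (M - u c) * q" for c
  have q: "0 < q" using L M by (simp add: q_def)
  have G_nonneg: "0 \<le> G c" if c: "c < L" for c
  proof (cases "u c = 0")
    case False
    have "u c * (M - u c) * q = (M - u c) / M * (u c / (L * M))"
      using M by (simp add: q_def field_simps power2_eq_square)
    also have "\<dots> \<le> (M - u c) / M * 1"
    proof (rule mult_left_mono)
      have "M \<le> L * M" using L M by simp
      then have "u c \<le> L * M" using u[OF c] by linarith
      then show "u c / (L * M) \<le> 1" using L M by simp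
    qed (use u[OF c] M in simp)
    also have "\<dots> = 1 - u c / M" using M by (simp add: field_simps)
    also have "\<dots> \<le> I c" using I(2)[OF c] u[OF c] False by simp
    finally show ?thesis by (simp add: G_def)
  qed (use I(1)[OF c] in \<open>simp add: G_def\<close>)
  have S_le: "S \<le> L * M"
    unfolding S_def using sum_bounded_above[of "{..<L}" u M] u by simp
  have u0_le: "u c0 \<le> S"
    unfolding S_def using c0 u by (intro member_le_sum) auto
  have "S * (L * M - S) * q + G c0 \<le> S * (L * M - S) * q + (\<Sum>c<L. G c)"
    using c0 G_nonneg by (intro add_left_mono member_le_sum) auto
  also have "\<dots> = (\<Sum>c<L. u c * (L * M - S) * q + G c)"
    by (simp add: sum.distrib S_def sum_distrib_right)
  also have "\<dots> = (\<Sum>c<L. I c + u c * (L * M - S - (M - u c)) / (L * M\<^sup>2))"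
    using L M by (intro sum.cong) (simp_all add: G_def q_def field_simps power2_eq_square)
  finally have sum_ge: "S * (L * M - S) * q + G c0 \<le> \<dots>" .
  have "S * (L * M - S) * q + (1 - u c0 / M) - u c0 * (M - u c0) * q - (1 - S / (L * M))
      = (S - u c0) * (L * M + M - S - u c0) * q"
    using L M by (simp add: q_def field_simps power2_eq_square)
  also have "\<dots> \<ge> 0"
    using u0_le S_le u[OF c0(1)] q by (intro mult_nonneg_nonneg) auto
  finally show ?thesis using sum_ge I(2)[OF c0] unfolding G_def by linarith
qed

lemma cut_weight_hball_Suc:
  assumes z: "z \<in> hvert L" and U: "U \<subseteq> hball L (Suc N) z"
  defines "W \<equiv> \<lambda>c. hball L N (z(Suc N := c))"
  shows "cut_weight L U (hball L (Suc N) z) =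
    (\<Sum>c<L. cut_weight L (U \<inter> W c) (W c)
       + card (U \<inter> W c) * card (hball L (Suc N) z - U - W c) * (real L / real L ^ (2 * Suc N)))"
proof -
  define f where "f x y = real L / real L ^ (2 * hdexp x y)" for x y
  let ?V = "hball L (Suc N) z"
  have V: "?V = (\<Union>c<L. W c)" by (simp add: W_def hball_Suc)
  have disj: "W c \<inter> W c' = {}" if "c \<noteq> c'" for c c'
    using hball_Suc_disjoint[OF that] by (simp add: W_def)
  have fin_V: "finite ?V" using finite_hball[OF z] .
  have fin_W: "finite (W c)" if "c < L" for c
    using fin_V V that by (metis UN_upper finite_subset lessThan_iff)
  have U_split: "U = (\<Union>c<L. U \<inter> W c)" using U V by blast
  have inner: "(\<Sum>y\<in>?V - U. f x y) = (\<Sum>y\<in>W c - U \<inter> W c. f x y)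
      + card (?V - U - W c) * (real L / real L ^ (2 * Suc N))"
    if c: "c < L" and x: "x \<in> U \<inter> W c" for c x
  proof -
    have "?V - U = (W c - U \<inter> W c) \<union> (?V - U - W c)" using V c by blast
    then have "sum (f x) (?V - U) = sum (f x) ((W c - U \<inter> W c) \<union> (?V - U - W c))"
      by (rule arg_cong)
    also have "\<dots> = (\<Sum>y\<in>W c - U \<inter> W c. f x y) + (\<Sum>y\<in>?V - U - W c. f x y)"
      using fin_V fin_W[OF c] by (intro sum.union_disjoint) auto
    finally have "(\<Sum>y\<in>?V - U. f x y)
        = (\<Sum>y\<in>W c - U \<inter> W c. f x y) + (\<Sum>y\<in>?V - U - W c. f x y)" .
    moreover have "f x y = real L / real L ^ (2 * Suc N)" if y: "y \<in> ?V - U - W c" for y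
    proof -
      obtain c' where "c' < L" "y \<in> W c'" "c' \<noteq> c" using y V by blast
      then have "hdexp x y = Suc N" using x hdexp_hball_Suc by (auto simp: W_def)
      then show ?thesis by (simp add: f_def)
    qed
    ultimately show ?thesis by simp
  qed
  have "cut_weight L U ?V = (\<Sum>c<L. \<Sum>x\<in>U \<inter> W c. \<Sum>y\<in>?V - U. f x y)"
    unfolding cut_weight_def f_def
    by (subst U_split, subst sum.UNION_disjoint) (use fin_W disj in \<open>auto simp flip: U_split\<close>)
  also have "\<dots> = (\<Sum>c<L. cut_weight L (U \<inter> W c) (W c)
       + card (U \<inter> W c) * card (?V - U - W c) * (real L / real L ^ (2 * Suc N)))"
    using inner by (simp add: cut_weight_def f_def sum.distrib)
  finally show ?thesis .
qed

lemma card_hball_Suc_Diff: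
  assumes z: "z \<in> hvert L" and c: "c < L" and U: "U \<subseteq> hball L (Suc N) z"
  defines "W \<equiv> hball L N (z(Suc N := c))"
  shows "real (card (hball L (Suc N) z - U - W))
           = real L ^ Suc N - real (card U) - (real L ^ N - real (card (U \<inter> W)))"
proof -
  let ?V = "hball L (Suc N) z"
  have z_upd: "z(Suc N := c) \<in> hvert L" using hvert_fun_upd[OF z c] by simp
  have sub: "U \<union> W \<subseteq> ?V" using U c by (auto simp: W_def hball_Suc)
  have fin_V: "finite ?V" using finite_hball[OF z] .
  have "?V - U - W = ?V - (U \<union> W)" by blast
  then have "card (?V - U - W) = card ?V - card (U \<union> W)"
    using sub fin_V by (metis card_Diff_subset finite_subset)
  moreover have "card (U \<union> W) \<le> card ?V" using sub fin_V by (intro card_mono)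
  ultimately have "real (card (?V - U - W)) = real L ^ Suc N - real (card (U \<union> W))"
    using card_hball[OF z, of "Suc N"] by (simp add: of_nat_diff)
  moreover have "card (U \<union> W) + card (U \<inter> W) = card U + L ^ N"
    using card_Un_Int[OF finite_subset[OF U fin_V] finite_hball[OF z_upd]] card_hball[OF z_upd]
    by (simp add: W_def)
  then have "real (card (U \<union> W)) + real (card (U \<inter> W)) = real (card U) + real L ^ N"
    by (metis of_nat_add of_nat_power)
  ultimately show ?thesis by linarith
qed

lemma cut_weight_hball_ge:
  assumes L: "1 \<le> L" and z: "z \<in> hvert L" and U: "U \<subseteq> hball L N z" "U \<noteq> {}"
  shows "1 - real (card U) / real L ^ N \<le> cut_weight L U (hball L N z)"
  using z U
proof (induction N arbitrary: z U)
  case 0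
  have "finite U" using finite_hball[OF 0(1)] 0(2) finite_subset by blast
  then have "1 \<le> card U" using 0(3) by (simp add: Suc_le_eq card_gt_0_iff)
  then have "1 - real (card U) / real L ^ 0 \<le> 0" by simp
  then show ?case using cut_weight_nonneg order_trans by blast
next
  case (Suc N)
  define V where "V = hball L (Suc N) z"
  define W where "W c = hball L N (z(Suc N := c))" for c
  define M where "M = real L ^ N"
  define u where "u c = real (card (U \<inter> W c))" for c
  have z_upd: "z(Suc N := c) \<in> hvert L" if "c < L" for c
    using hvert_fun_upd[OF Suc.prems(1) that] by simp
  have fin_U: "finite U" using finite_hball[OF Suc.prems(1)] Suc.prems(2) finite_subset by blast
  have u_le: "0 \<le> u c \<and> u c \<le> M" if "c < L" for c
    using card_mono[OF finite_hball[OF z_upd[OF that]], of "U \<inter> W c"]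
    by (simp add: u_def M_def W_def card_hball[OF z_upd[OF that]])
  have U_split: "U = (\<Union>c<L. U \<inter> W c)" using Suc.prems(2) by (auto simp: W_def hball_Suc)
  have disj: "(U \<inter> W c) \<inter> (U \<inter> W c') = {}" if "c \<noteq> c'" for c c'
    using hball_Suc_disjoint[OF that] by (auto simp: W_def)
  have "card (\<Union>c<L. U \<inter> W c) = (\<Sum>c<L. card (U \<inter> W c))"
    using fin_U disj by (intro card_UN_disjoint) auto
  then have "card U = (\<Sum>c<L. card (U \<inter> W c))"
    by (simp only: flip: U_split)
  then have card_U: "real (card U) = (\<Sum>c<L. u c)"
    by (simp add: u_def)
  have IH: "1 - u c / M \<le> cut_weight L (U \<inter> W c) (W c)" if c: "c < L" "0 < u c" for c
  proof -
    have "U \<inter> W c \<noteq> {}" using c(2) by (auto simp: u_def)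
    from Suc.IH[OF z_upd[OF c(1)] _ this] show ?thesis
      unfolding u_def M_def W_def by blast
  qed
  obtain x c0 where "x \<in> U" "c0 < L" "x \<in> W c0"
    using Suc.prems(2,3) by (force simp: W_def hball_Suc)
  then have c0: "c0 < L" "0 < u c0"
    using fin_U by (auto simp: u_def card_gt_0_iff)
  have "M\<^sup>2 = real L ^ (2 * N)" by (simp add: M_def power_mult_distrib power_mult mult.commute)
  then have "cut_weight L U V = (\<Sum>c<L. cut_weight L (U \<inter> W c) (W c)
       + u c * (L * M - real (card U) - (M - u c)) / (L * M\<^sup>2))"
    using cut_weight_hball_Suc[OF Suc.prems(1,2)] card_hball_Suc_Diff[OF Suc.prems(1) _ Suc.prems(2)] L
    by (simp add: V_def W_def u_def M_def)
  moreover have "1 - real (card U) / (L * M) \<le> \<dots>"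
    unfolding card_U using L u_le IH c0 cut_weight_nonneg
    by (intro cut_weight_recursion_ge) (auto simp: M_def)
  ultimately show ?case by (simp add: V_def M_def)
qed

section \<open>Closed cuts\<close>

definition closed_cut :: "(nat \<Rightarrow> nat) set \<Rightarrow> (nat \<Rightarrow> nat) set \<Rightarrow> ((nat \<Rightarrow> nat) set \<Rightarrow> bool) set" where
  "closed_cut V U = {\<omega>. \<forall>x\<in>U. \<forall>y\<in>V - U. \<not> \<omega> {x, y}}"

lemma closed_cut_Diff:
  assumes "U \<subseteq> V"
  shows "closed_cut V (V - U) = closed_cut V U"
proof -
  have "V - (V - U) = U" using assms by blast
  then show ?thesis unfolding closed_cut_def by (auto; metis DiffI insert_commute)
qed

lemma finite_box_edges:
  assumes "1 \<le> L"
  shows "finite (box_edges L N)"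
proof -
  let ?V = "hball L N (\<lambda>_. 0)"
  have "box_edges L N \<subseteq> (\<lambda>(x, y). {x, y}) ` (?V \<times> ?V)"
    by (auto simp: box_edges_def)
  then show ?thesis
    using finite_hball[OF zero_in_hvert[OF assms]] by (meson finite_SigmaI finite_imageI finite_subset)
qed

lemma prob_closed_cut:
  assumes L: "1 \<le> L" and J: "\<forall>e\<in>hedges L. 0 \<le> J e"
    and U: "U \<subseteq> hball L N (\<lambda>_. 0)"
  defines "V \<equiv> hball L N (\<lambda>_. 0)"
  shows "measure_pmf.prob (perc_pmf L J N) (closed_cut V U) = exp (- (\<Sum>x\<in>U. \<Sum>y\<in>V - U. J {x, y}))"
proof -
  define A where "A = box_edges L N"
  define cut where "cut = (\<lambda>(x, y). {x, y}) ` (U \<times> (V - U))"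
  define B where "B e = (if e \<in> cut then {False} else UNIV)" for e :: "(nat \<Rightarrow> nat) set"
  have fin_A: "finite A" using finite_box_edges[OF L] by (simp add: A_def)
  have cut_A: "cut \<subseteq> A" using U by (auto simp: cut_def A_def box_edges_def V_def)
  have A_hedges: "A \<subseteq> hedges L" by (auto simp: A_def box_edges_def hedges_def hball_def)
  have "closed_cut V U = Pi A B"
    using cut_A by (auto simp: closed_cut_def Pi_def B_def cut_def)
  then have "measure_pmf.prob (perc_pmf L J N) (closed_cut V U)
      = (\<Prod>e\<in>A. measure_pmf.prob (bernoulli_pmf (1 - exp (- J e))) (B e))"
    unfolding perc_pmf_def A_def using fin_A by (simp add: A_def measure_Pi_pmf_Pi)
  also have "\<dots> = (\<Prod>e\<in>A. if e \<in> cut then exp (- J e) else 1)"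
  proof (rule prod.cong)
    fix e assume "e \<in> A"
    then have "0 \<le> J e" using A_hedges J by auto
    then show "measure_pmf.prob (bernoulli_pmf (1 - exp (- J e))) (B e)
        = (if e \<in> cut then exp (- J e) else 1)"
      by (auto simp: B_def measure_pmf_single)
  qed simp
  also have "\<dots> = (\<Prod>e\<in>cut. exp (- J e))"
    using prod.inter_restrict[OF fin_A, of "\<lambda>e. exp (- J e)" cut] cut_A by (simp add: Int_absorb1)
  also have "\<dots> = exp (- (\<Sum>e\<in>cut. J e))"
    using finite_subset[OF cut_A fin_A] by (simp add: exp_sum flip: sum_negf)
  also have "(\<Sum>e\<in>cut. J e) = (\<Sum>x\<in>U. \<Sum>y\<in>V - U. J {x, y})"
  proof -
    have "inj_on (\<lambda>(x, y). {x, y}) (U \<times> (V - U))"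
      by (auto simp: inj_on_def doubleton_eq_iff)
    then have "(\<Sum>e\<in>cut. J e) = (\<Sum>(x, y)\<in>U \<times> (V - U). J {x, y})"
      unfolding cut_def by (simp add: sum.reindex case_prod_unfold)
    then show ?thesis by (simp add: sum.cartesian_product)
  qed
  finally show ?thesis .
qed

lemma rtranclp_block_adj_blocks:
  "(block_adj L n k \<omega>)\<^sup>*\<^sup>* B1 B \<Longrightarrow> B1 \<in> blocks L n k \<Longrightarrow> B \<in> blocks L n k"
  by (induction rule: rtranclp_induct) (auto simp: block_adj_def)

lemma cluster_in_closed_cut:
  assumes B1: "B1 \<in> blocks L n k"
  shows "\<omega> \<in> closed_cut (hball L (n + k) (\<lambda>_. 0)) (\<Union>{B. (block_adj L n k \<omega>)\<^sup>*\<^sup>* B1 B})"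
  unfolding closed_cut_def
proof (intro CollectI ballI notI)
  let ?R = "(block_adj L n k \<omega>)\<^sup>*\<^sup>*"
  fix x y assume x: "x \<in> \<Union>{B. ?R B1 B}" and y: "y \<in> hball L (n + k) (\<lambda>_. 0) - \<Union>{B. ?R B1 B}"
    and open_xy: "\<omega> {x, y}"
  obtain B where B: "?R B1 B" "x \<in> B" using x by blast
  have "hball L n y \<in> blocks L n k" "y \<in> hball L n y"
    using y hball_in_blocks hball_refl hball_subset_hvert by blast+
  then have "block_adj L n k \<omega> B (hball L n y)"
    using B y open_xy rtranclp_block_adj_blocks[OF B(1) B1] by (auto simp: block_adj_def)
  then have "?R B1 (hball L n y)" using B(1) by simp
  then show False using y \<open>y \<in> hball L n y\<close> by blast
qed

lemma has_cluster_of_size_imp_closed_cut: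
  assumes "has_cluster_of_size L n k \<omega> m"
  shows "\<exists>S \<subseteq> blocks L n k. card S = m \<and> \<omega> \<in> closed_cut (hball L (n + k) (\<lambda>_. 0)) (\<Union>S)"
proof -
  obtain B1 where B1: "B1 \<in> blocks L n k" "card {B. (block_adj L n k \<omega>)\<^sup>*\<^sup>* B1 B} = m"
    using assms by (auto simp: has_cluster_of_size_def)
  define S where "S = {B. (block_adj L n k \<omega>)\<^sup>*\<^sup>* B1 B}"
  have "S \<subseteq> blocks L n k" using rtranclp_block_adj_blocks[OF _ B1(1)] by (auto simp: S_def)
  moreover have "\<omega> \<in> closed_cut (hball L (n + k) (\<lambda>_. 0)) (\<Union>S)"
    using cluster_in_closed_cut[OF B1(1)] by (simp add: S_def)
  ultimately show ?thesis using B1(2) by (auto simp: S_def)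
qed

lemma not_blocks_connected_imp_small_closed_cut:
  assumes L: "1 \<le> L" and "\<not> blocks_connected L n k \<omega>"
  shows "\<exists>S \<subseteq> blocks L n k. S \<noteq> {} \<and> 2 * card S \<le> L ^ k
           \<and> \<omega> \<in> closed_cut (hball L (n + k) (\<lambda>_. 0)) (\<Union>S)"
proof -
  let ?V = "hball L (n + k) (\<lambda>_. 0)"
  obtain B1 B2 where B: "B1 \<in> blocks L n k" "B2 \<in> blocks L n k"
    "\<not> (block_adj L n k \<omega>)\<^sup>*\<^sup>* B1 B2"
    using assms(2) by (auto simp: blocks_connected_def)
  define S where "S = {B. (block_adj L n k \<omega>)\<^sup>*\<^sup>* B1 B}"
  have S: "S \<subseteq> blocks L n k" "B1 \<in> S" "B2 \<notin> S"
    using rtranclp_block_adj_blocks B by (auto simp: S_def)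
  have cut: "\<omega> \<in> closed_cut ?V (\<Union>S)" using cluster_in_closed_cut[OF B(1)] by (simp add: S_def)
  show ?thesis
  proof (cases "2 * card S \<le> L ^ k")
    case True
    then show ?thesis using S cut by blast
  next
    case False
    \<comment> \<open>then the complementary set of blocks is the small side of the same cut\<close>
    have "card (blocks L n k - S) = L ^ k - card S"
      using S(1) finite_blocks[OF L] card_blocks[OF L] by (simp add: card_Diff_subset finite_subset)
    then have "2 * card (blocks L n k - S) \<le> L ^ k" using False by simp
    moreover have "closed_cut ?V (\<Union>(blocks L n k - S)) = closed_cut ?V (\<Union>S)"
      using S(1) Union_blocks closed_cut_Diff by (metis Union_Diff_blocks Union_mono)
    moreover have "blocks L n k - S \<noteq> {}" using B(2) S(3) by blast
    ultimately show ?thesis using cut by blast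
  qed
qed

section \<open>Probability bounds\<close>

lemma prob_le_union_bound_Pow:
  fixes p :: "'a pmf" and E :: "'b set \<Rightarrow> 'a set"
  assumes X: "finite X" and F: "F \<subseteq> Pow X" and A: "A \<subseteq> (\<Union>S\<in>F. E S)"
    and b: "\<And>S. S \<in> F \<Longrightarrow> measure_pmf.prob p (E S) \<le> b" and b_nonneg: "0 \<le> b"
  shows "measure_pmf.prob p A \<le> 2 ^ card X * b"
proof -
  have fin_F: "finite F" using X F finite_subset by blast
  have "measure_pmf.prob p A \<le> measure_pmf.prob p (\<Union>S\<in>F. E S)"
    using A by (rule measure_pmf.finite_measure_mono) simp
  also have "\<dots> \<le> (\<Sum>S\<in>F. measure_pmf.prob p (E S))"
    using fin_F by (intro measure_pmf.finite_measure_subadditive_finite) auto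
  also have "\<dots> \<le> card F * b" using b sum_bounded_above[of F _ b] by simp
  also have "\<dots> \<le> 2 ^ card X * b"
    using card_mono[OF _ F] X b_nonneg by (simp add: card_Pow mult_right_mono)
  finally show ?thesis .
qed

locale hierarchical_kernel =
  fixes L :: nat and a :: real and J :: "(nat \<Rightarrow> nat) set \<Rightarrow> real"
  assumes L_ge_1: "1 \<le> L" and a_pos: "0 < a"
    and J_nonneg: "\<forall>e\<in>hedges L. 0 \<le> J e"
    and J_lower: "\<forall>x\<in>hvert L. \<forall>y\<in>hvert L. x \<noteq> y \<longrightarrow>
                   a * real L * ln (real (hdexp x y)) / real L ^ (2 * hdexp x y) \<le> J {x, y}"
begin

lemma prob_closed_cut_le:
  assumes U: "U \<subseteq> hball L N (\<lambda>_. 0)" "U \<noteq> {}" and n: "1 \<le> n"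
    and far: "\<forall>x\<in>U. \<forall>y\<in>hball L N (\<lambda>_. 0) - U. n < hdexp x y"
  defines "V \<equiv> hball L N (\<lambda>_. 0)"
  shows "measure_pmf.prob (perc_pmf L J N) (closed_cut V U)
           \<le> real n powr (- a * (1 - real (card U) / real L ^ N))"
proof -
  have J_ge: "a * ln n * (real L / real L ^ (2 * hdexp x y)) \<le> J {x, y}"
    if x: "x \<in> U" and y: "y \<in> V - U" for x y
  proof -
    have xy: "x \<in> hvert L" "y \<in> hvert L" "x \<noteq> y"
      using x y U hball_subset_hvert[of L N "\<lambda>_. 0"] by (auto simp: V_def)
    have "n < hdexp x y" using far x y by (simp add: V_def)
    then have "a * ln n * (real L / real L ^ (2 * hdexp x y))
        \<le> a * ln (hdexp x y) * (real L / real L ^ (2 * hdexp x y))"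
      using n a_pos by (intro mult_right_mono mult_left_mono) auto
    also have "\<dots> = a * real L * ln (hdexp x y) / real L ^ (2 * hdexp x y)"
      by simp
    also have "\<dots> \<le> J {x, y}" using J_lower xy by blast
    finally show ?thesis .
  qed
  have "a * ln n * (1 - real (card U) / real L ^ N) \<le> a * ln n * cut_weight L U V"
    using cut_weight_hball_ge[OF L_ge_1 zero_in_hvert[OF L_ge_1] U] a_pos n
    by (intro mult_left_mono) (auto simp: V_def)
  also have "\<dots> \<le> (\<Sum>x\<in>U. \<Sum>y\<in>V - U. J {x, y})"
    unfolding cut_weight_def sum_distrib_left using J_ge by (intro sum_mono) auto
  finally have "exp (- (\<Sum>x\<in>U. \<Sum>y\<in>V - U. J {x, y}))
      \<le> exp (- (a * ln n * (1 - real (card U) / real L ^ N)))"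
    by simp
  also have "\<dots> = real n powr (- a * (1 - real (card U) / real L ^ N))"
    using n by (simp add: powr_def)
  finally show ?thesis
    using prob_closed_cut[OF L_ge_1 J_nonneg U(1)] by (simp add: V_def)
qed

lemma prob_closed_cut_blocks_le:
  assumes S: "S \<subseteq> blocks L n k" "S \<noteq> {}" and n: "1 \<le> n"
  shows "measure_pmf.prob (perc_pmf L J (n + k)) (closed_cut (hball L (n + k) (\<lambda>_. 0)) (\<Union>S))
           \<le> real n powr (- a * (1 - real (card S) / real L ^ k))"
proof -
  have card: "card (\<Union>S) = card S * L ^ n" using card_Union_blocks[OF L_ge_1 S(1)] .
  obtain x where "hball L n x \<in> S" "x \<in> hball L (n + k) (\<lambda>_. 0)"
    using S by (auto simp: blocks_def)
  then have nonempty: "\<Union>S \<noteq> {}" using hball_refl hball_subset_hvert by blast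
  have sub: "\<Union>S \<subseteq> hball L (n + k) (\<lambda>_. 0)" using S(1) Union_blocks by blast
  have far: "\<forall>x\<in>\<Union>S. \<forall>y\<in>hball L (n + k) (\<lambda>_. 0) - \<Union>S. n < hdexp x y"
    using less_hdexp_if_separated_by_blocks[OF S(1)] by blast
  have "real (card (\<Union>S)) / real L ^ (n + k) = real (card S) / real L ^ k"
    using card L_ge_1 by (simp add: power_add)
  with prob_closed_cut_le[OF sub nonempty n far] show ?thesis by simp
qed

lemma prob_not_blocks_connected_le:
  assumes n: "1 \<le> n"
  shows "measure_pmf.prob (perc_pmf L J (n + k)) {\<omega>. \<not> blocks_connected L n k \<omega>}
           \<le> 2 ^ (L ^ k) * real n powr (- a / 2)"
proof -
  let ?V = "hball L (n + k) (\<lambda>_. 0)"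
  let ?F = "{S. S \<subseteq> blocks L n k \<and> S \<noteq> {} \<and> 2 * card S \<le> L ^ k}"
  have "{\<omega>. \<not> blocks_connected L n k \<omega>} \<subseteq> (\<Union>S\<in>?F. closed_cut ?V (\<Union>S))"
  proof
    fix \<omega> assume "\<omega> \<in> {\<omega>. \<not> blocks_connected L n k \<omega>}"
    then obtain S where "S \<subseteq> blocks L n k" "S \<noteq> {}" "2 * card S \<le> L ^ k"
        "\<omega> \<in> closed_cut ?V (\<Union>S)"
      using not_blocks_connected_imp_small_closed_cut[OF L_ge_1, of n k \<omega>] by blast
    then show "\<omega> \<in> (\<Union>S\<in>?F. closed_cut ?V (\<Union>S))" by blast
  qed
  moreover have "measure_pmf.prob (perc_pmf L J (n + k)) (closed_cut ?V (\<Union>S)) \<le> real n powr (- a / 2)"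
    if S: "S \<in> ?F" for S
  proof -
    have "2 * card S \<le> L ^ k" using S by simp
    then have "2 * real (card S) \<le> real L ^ k"
      by (metis of_nat_le_iff of_nat_mult of_nat_numeral of_nat_power)
    then have "real (card S) / real L ^ k \<le> 1 / 2"
      using L_ge_1 by (simp add: field_simps)
    then have "a * (1 / 2) \<le> a * (1 - real (card S) / real L ^ k)"
      using a_pos by (intro mult_left_mono) auto
    then have "real n powr (- a * (1 - real (card S) / real L ^ k)) \<le> real n powr (- a / 2)"
      using n by (intro powr_mono) auto
    then show ?thesis using prob_closed_cut_blocks_le[OF _ _ n] S by (blast intro: order_trans)
  qed
  ultimately have "measure_pmf.prob (perc_pmf L J (n + k)) {\<omega>. \<not> blocks_connected L n k \<omega>}
      \<le> 2 ^ card (blocks L n k) * real n powr (- a / 2)"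
    by (intro prob_le_union_bound_Pow[OF finite_blocks[OF L_ge_1]]) auto
  then show ?thesis by (simp add: card_blocks[OF L_ge_1])
qed

lemma prob_has_cluster_of_size_le:
  assumes n: "1 \<le> n" and m: "1 \<le> m"
  shows "measure_pmf.prob (perc_pmf L J (n + k)) {\<omega>. has_cluster_of_size L n k \<omega> m}
           \<le> 2 ^ (L ^ k) * real n powr (- a * (1 - real m / real L ^ k))"
proof -
  let ?V = "hball L (n + k) (\<lambda>_. 0)"
  let ?F = "{S. S \<subseteq> blocks L n k \<and> card S = m}"
  have "{\<omega>. has_cluster_of_size L n k \<omega> m} \<subseteq> (\<Union>S\<in>?F. closed_cut ?V (\<Union>S))"
  proof
    fix \<omega> assume "\<omega> \<in> {\<omega>. has_cluster_of_size L n k \<omega> m}"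
    then obtain S where "S \<subseteq> blocks L n k" "card S = m" "\<omega> \<in> closed_cut ?V (\<Union>S)"
      using has_cluster_of_size_imp_closed_cut[of L n k \<omega> m] by blast
    then show "\<omega> \<in> (\<Union>S\<in>?F. closed_cut ?V (\<Union>S))" by blast
  qed
  moreover have "measure_pmf.prob (perc_pmf L J (n + k)) (closed_cut ?V (\<Union>S))
      \<le> real n powr (- a * (1 - real m / real L ^ k))" if S: "S \<in> ?F" for S
  proof -
    have "S \<subseteq> blocks L n k" "card S = m" "S \<noteq> {}" using S m by auto
    with prob_closed_cut_blocks_le[OF _ _ n] show ?thesis by blast
  qed
  ultimately have "measure_pmf.prob (perc_pmf L J (n + k)) {\<omega>. has_cluster_of_size L n k \<omega> m}
      \<le> 2 ^ card (blocks L n k) * real n powr (- a * (1 - real m / real L ^ k))"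
    by (intro prob_le_union_bound_Pow[OF finite_blocks[OF L_ge_1]]) auto
  then show ?thesis by (simp add: card_blocks[OF L_ge_1])
qed

end

theorem lemma5p3:
  fixes L :: nat and a :: real and J :: "(nat \<Rightarrow> nat) set \<Rightarrow> real"
  assumes L2: "L \<ge> 2"
    and apos: "a > 0"
    and kernel: "\<forall>e\<in>hedges L. J e \<ge> 0"
    and lower: "\<forall>x\<in>hvert L. \<forall>y\<in>hvert L. x \<noteq> y \<longrightarrow>
                 J {x, y} \<ge> a * real L * ln (real (hdexp x y)) / real L ^ (2 * hdexp x y)"
  shows "\<forall>k::nat. \<exists>C::real. \<forall>n::nat. n \<ge> 1 \<longrightarrow> (\<forall>m\<in>{1..L ^ k}.
           measure_pmf.prob (perc_pmf L J (n + k)) {\<omega>. \<not> blocks_connected L n k \<omega>}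
             \<le> C * real n powr (- a / 2)
         \<and> measure_pmf.prob (perc_pmf L J (n + k)) {\<omega>. has_cluster_of_size L n k \<omega> m}
             \<le> C * real n powr (- a * (1 - real m / real L ^ k)))"
proof -
  interpret hierarchical_kernel L a J
    using assms by unfold_locales auto
  show ?thesis
    apply (intro allI)
    subgoal for k
      using prob_not_blocks_connected_le prob_has_cluster_of_size_le
      by (intro exI[of _ "2 ^ L ^ k"]) auto
    done
qed

end
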